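(* Let $\mathbb{K}\in\{\mathbb{R},\mathbb{C}\}$, let $\omega=\mathbb{K}^{\mathbb{N}}$ be the product of countably many copies of $\mathbb{K}$ with the product topology, and let $T:\omega\to\omega$ be a continuous linear operator. Then the following conditions are equivalent: (1) the dual operator $T'$ has no non-trivial finite dimensional invariant subspaces; (2) $T$ is hypercyclic; (3) $T$ is hereditarily hypercyclic; (4) for any sequence $\{p_k\}_{k\in\mathbb{N}}$ of polynomials with coefficients in $\mathbb{K}$ such that $\deg p_k\to\infty$, there is $x\in\omega$ such that $\{p_k(T)x:k\in\mathbb{N}\}$ is dense in $\omega$.
   Context: $\omega'$ denotes the space of continuous linear functionals on $\omega$, and the dual operator $T':\omega'\to\omega'$ is $(T'f)(x)=f(Tx)$. A non-trivial subspace means a subspace different from $\{0\}$; a subspace $L$ is invariant for $T'$ if $T'(L)\subseteq L$. $T$ is hypercyclic if there is $x\in\omega$ with $\{T^nx:n\in\mathbb{N}\}$ dense in $\omega$. $T$ is hereditarily hypercyclic if for each infinite subset $A\subseteq\mathbb{N}$ there is $x\in\omega$ such that $\{T^nx:n\in A\}$ is dense in $\omega$. *)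

theory Defs
  imports "HOL-Analysis.Analysis" "HOL-Computational_Algebra.Polynomial"
begin

text \<open>omega = K^N is the function type nat => K, carrying the product topology
  (instance from HOL-Analysis Function_Topology). K is real or complex;
  linearity is K-linearity, written pointwise.\<close>

definition klinear :: "((nat \<Rightarrow> 'a::real_normed_field) \<Rightarrow> 'a) \<Rightarrow> bool" where
  "klinear f \<longleftrightarrow> (\<forall>x y. f (\<lambda>n. x n + y n) = f x + f y) \<and>
                   (\<forall>c x. f (\<lambda>n. c * x n) = c * f x)"

definition klinear_op :: "((nat \<Rightarrow> 'a::real_normed_field) \<Rightarrow> (nat \<Rightarrow> 'a)) \<Rightarrow> bool" where
  "klinear_op T \<longleftrightarrow> (\<forall>x y. T (\<lambda>n. x n + y n) = (\<lambda>n. T x n + T y n)) \<and>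
                   (\<forall>c x. T (\<lambda>n. c * x n) = (\<lambda>n. c * T x n))"

definition dual_space :: "((nat \<Rightarrow> 'a::real_normed_field) \<Rightarrow> 'a) set" where
  "dual_space = {f. klinear f \<and> continuous_on UNIV f}"

definition dual_op :: "((nat \<Rightarrow> 'a) \<Rightarrow> (nat \<Rightarrow> 'a)) \<Rightarrow> ((nat \<Rightarrow> 'a) \<Rightarrow> 'a) \<Rightarrow> ((nat \<Rightarrow> 'a) \<Rightarrow> 'a)" where
  "dual_op T f = (\<lambda>x. f (T x))"

definition kspan :: "((nat \<Rightarrow> 'a::real_normed_field) \<Rightarrow> 'a) set \<Rightarrow> ((nat \<Rightarrow> 'a) \<Rightarrow> 'a) set" where
  "kspan B = {f. \<exists>F c. finite F \<and> F \<subseteq> B \<and> f = (\<lambda>x. \<Sum>g\<in>F. c g * g x)}"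

definition dual_subspace :: "((nat \<Rightarrow> 'a::real_normed_field) \<Rightarrow> 'a) set \<Rightarrow> bool" where
  "dual_subspace L \<longleftrightarrow> L \<subseteq> dual_space \<and> (\<lambda>x. 0) \<in> L \<and>
     (\<forall>f\<in>L. \<forall>g\<in>L. (\<lambda>x. f x + g x) \<in> L) \<and>
     (\<forall>c. \<forall>f\<in>L. (\<lambda>x. c * f x) \<in> L)"

definition finite_dim :: "((nat \<Rightarrow> 'a::real_normed_field) \<Rightarrow> 'a) set \<Rightarrow> bool" where
  "finite_dim L \<longleftrightarrow> (\<exists>B. finite B \<and> L \<subseteq> kspan B)"

definition no_fin_dim_dual_invariant :: "((nat \<Rightarrow> 'a::real_normed_field) \<Rightarrow> (nat \<Rightarrow> 'a)) \<Rightarrow> bool" where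
  "no_fin_dim_dual_invariant T \<longleftrightarrow>
     \<not> (\<exists>L. dual_subspace L \<and> finite_dim L \<and> L \<noteq> {(\<lambda>x. 0)} \<and> dual_op T ` L \<subseteq> L)"

definition hypercyclic :: "((nat \<Rightarrow> 'a::real_normed_field) \<Rightarrow> (nat \<Rightarrow> 'a)) \<Rightarrow> bool" where
  "hypercyclic T \<longleftrightarrow> (\<exists>x. closure {(T ^^ n) x | n. True} = UNIV)"

definition hereditarily_hypercyclic :: "((nat \<Rightarrow> 'a::real_normed_field) \<Rightarrow> (nat \<Rightarrow> 'a)) \<Rightarrow> bool" where
  "hereditarily_hypercyclic T \<longleftrightarrow>
     (\<forall>A::nat set. infinite A \<longrightarrow> (\<exists>x. closure {(T ^^ n) x | n. n \<in> A} = UNIV))"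

definition poly_op :: "'a::real_normed_field poly \<Rightarrow> ((nat \<Rightarrow> 'a) \<Rightarrow> (nat \<Rightarrow> 'a)) \<Rightarrow> (nat \<Rightarrow> 'a) \<Rightarrow> (nat \<Rightarrow> 'a)" where
  "poly_op p T x = (\<lambda>m. \<Sum>i\<le>degree p. coeff p i * (T ^^ i) x m)"

definition poly_seq_dense :: "((nat \<Rightarrow> 'a::real_normed_field) \<Rightarrow> (nat \<Rightarrow> 'a)) \<Rightarrow> bool" where
  "poly_seq_dense T \<longleftrightarrow>
     (\<forall>p :: nat \<Rightarrow> 'a poly. filterlim (\<lambda>k. degree (p k)) at_top sequentially \<longrightarrow>
        (\<exists>x. closure {poly_op (p k) T x | k. True} = UNIV))"

end

theory Submission
  imports Defs "HOL-Library.Function_Algebras" "HOL-Computational_Algebra.Fundamental_Theorem_Algebra"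
begin

text \<open>(1) implies (4): let E be the first N coordinate functionals and krylov n the span of
  E, T'E, ..., T'^n E. A dimension count makes the increments of dim (krylov n) decrease, and
  once they are constant, the absence of finite dimensional T'-invariant subspaces forces:
  for deg p large, p(T') maps no non-zero element of span E back into span E. Dually, the
  first N coordinates of x and of p_k(T) x can be prescribed independently for large k, so the
  maps p_k(T) are topologically transitive, and Birkhoff's Baire category argument gives a
  dense orbit. (4) implies (3) by taking p_k = X^(n_k) for an enumeration n_k of A, and (3)
  implies (2) trivially. (2) implies (1): a finite dimensional T'-invariant subspace contains
  an eigenvector g of T' over \<complex>, and g would map a dense orbit x, Tx, ... onto the
  sequence \<lambda>^n g(x), whose closure cannot contain a whole real line.\<close>

lemma antimono_nat_eventually_const:
  fixes f :: "nat \<Rightarrow> nat"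
  assumes "\<And>n. f (Suc n) \<le> f n"
  shows "\<exists>n0. \<forall>n\<ge>n0. f n = f n0"
proof -
  let ?m = "LEAST v. \<exists>n. f n = v"
  obtain n0 where n0: "f n0 = ?m" using LeastI_ex[of "\<lambda>v. \<exists>n. f n = v"] by blast
  have "f n = f n0" if "n \<ge> n0" for n
  proof -
    have "f n \<le> f n0" using that assms by (induction rule: dec_induct) (auto intro: order_trans)
    moreover have "?m \<le> f n" by (auto intro: Least_le)
    ultimately show ?thesis using n0 by simp
  qed
  then show ?thesis by blast
qed

context vector_space
begin

lemma finite_basis_in_span:
  assumes "V \<subseteq> span F" "finite F"
  obtains B where "B \<subseteq> V" "independent B" "V \<subseteq> span B" "card B = dim V" "finite B"
proof -
  obtain B where B: "B \<subseteq> V" "independent B" "V \<subseteq> span B" "card B = dim V"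
    using basis_exists by blast
  then have "finite B" using independent_span_bound[OF assms(2), of B] assms(1) by blast
  then show ?thesis using B that by blast
qed

lemma dim_subset_in_span:
  assumes "X \<subseteq> Y" "Y \<subseteq> span F" "finite F"
  shows "dim X \<le> dim Y"
proof -
  obtain B where "B \<subseteq> Y" "independent B" "Y \<subseteq> span B" "card B = dim Y" "finite B"
    using finite_basis_in_span[OF assms(2,3)] .
  then show ?thesis using dim_le_card[of X B] assms(1) by auto
qed

lemma subspace_dim_equal_in_span:
  assumes "subspace S" "subspace T" "S \<subseteq> T" "dim S \<ge> dim T" "T \<subseteq> span F" "finite F"
  shows "S = T"
proof -
  obtain B where B: "B \<subseteq> S" "independent B" "S \<subseteq> span B" "card B = dim S" "finite B"
    using finite_basis_in_span[of S F] assms by blast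
  obtain C where C: "B \<subseteq> C" "C \<subseteq> T" "independent C" "T \<subseteq> span C"
    using maximal_independent_subset_extend[of B T] B assms by blast
  have "finite C" using independent_span_bound[OF assms(6) C(3)] C assms by blast
  moreover have "card C = dim T" using basis_card_eq_dim[OF C(2,4,3)] .
  ultimately have "B = C" using card_seteq[OF _ C(1)] B assms(4) by simp
  then have "T \<subseteq> S" using C(4) span_minimal[OF B(1) assms(1)] by blast
  then show ?thesis using assms by blast
qed

end

text \<open>The condition on A is the hypothesis on T' restricted to a subspace V, so that V can be
  the continuous dual rather than all functionals.\<close>

locale no_finite_invariant = vector_space scale
  for scale :: "'a::field \<Rightarrow> 'b::ab_group_add \<Rightarrow> 'b" (infixr \<open>*s\<close> 75) +
  fixes A :: "'b \<Rightarrow> 'b" and V :: "'b set" and E :: "'b set"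
  assumes A_add: "\<And>x y. A (x + y) = A x + A y"
    and A_scale: "\<And>c x. A (c *s x) = c *s A x"
    and subspace_V: "subspace V" and A_V: "A ` V \<subseteq> V"
    and finite_E: "finite E" and E_V: "E \<subseteq> V"
    and no_invariant: "\<And>L F. subspace L \<Longrightarrow> finite F \<Longrightarrow> L \<subseteq> span F \<Longrightarrow> A ` L \<subseteq> L \<Longrightarrow>
                         L \<subseteq> V \<Longrightarrow> L \<subseteq> {0}"
begin

lemma A_hom: "module_hom scale scale A"
  by (simp add: module_hom_def module_hom_axioms_def A_add A_scale module_axioms)

lemma A_zero: "A 0 = 0"
  using module_hom.zero[OF A_hom] .

lemma A_span: "A ` span S = span (A ` S)"
  using module_hom.span_image[OF A_hom] by simp

lemma A_pow_hom: "module_hom scale scale (A ^^ i)"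
  by (induction i) (auto simp: module_hom_def module_hom_axioms_def module_axioms A_add A_scale)

lemma A_pow_add: "(A ^^ i) (x + y) = (A ^^ i) x + (A ^^ i) y"
  using module_hom.add[OF A_pow_hom] .

lemma A_pow_scale: "(A ^^ i) (c *s x) = c *s (A ^^ i) x"
  using module_hom.scale[OF A_pow_hom] .

lemma A_pow_sum: "(A ^^ i) (sum g S) = (\<Sum>x\<in>S. (A ^^ i) (g x))"
  using module_hom.sum[OF A_pow_hom] .

lemma A_pow_commute: "(A ^^ j) ((A ^^ i) h) = (A ^^ i) ((A ^^ j) h)"
  by (simp flip: funpow_add[THEN fun_cong, unfolded comp_def] add: add.commute)

fun krylov :: "nat \<Rightarrow> 'b set" where
  "krylov 0 = span E"
| "krylov (Suc n) = span (krylov n \<union> A ` krylov n)"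

declare krylov.simps(2) [simp del]

lemma subspace_krylov: "subspace (krylov n)"
  by (cases n) (auto simp: krylov.simps)

lemma krylov_Suc_mono: "krylov n \<subseteq> krylov (Suc n)"
  by (auto simp: krylov.simps intro: span_superset[THEN subsetD])

lemma krylov_mono: "m \<le> n \<Longrightarrow> krylov m \<subseteq> krylov n"
  by (induction rule: dec_induct) (use krylov_Suc_mono in blast)+

lemma A_krylov: "v \<in> krylov n \<Longrightarrow> A v \<in> krylov (Suc n)"
  by (auto simp: krylov.simps intro: span_superset[THEN subsetD])

lemma A_pow_krylov: "v \<in> krylov n \<Longrightarrow> (A ^^ j) v \<in> krylov (n + j)"
  by (induction j) (auto simp: A_krylov)

lemma krylov_finite_span: obtains F where "finite F" "krylov n = span F"
proof -
  have "\<exists>F. finite F \<and> krylov n = span F"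
  proof (induction n)
    case 0
    then show ?case using finite_E by auto
  next
    case (Suc n)
    then obtain F where F: "finite F" "krylov n = span F" by blast
    have "krylov (Suc n) = span (span F \<union> span (A ` F))"
      by (simp add: krylov.simps F(2) A_span)
    also have "\<dots> = span (F \<union> A ` F)"
      by (simp add: span_Un span_span)
    finally show ?case using F(1) by blast
  qed
  then show ?thesis using that by blast
qed

lemma krylov_V: "krylov n \<subseteq> V"
proof (induction n)
  case 0
  then show ?case using E_V subspace_V span_minimal by auto
next
  case (Suc n)
  then have "krylov n \<union> A ` krylov n \<subseteq> V" using A_V by auto
  then show ?case using subspace_V span_minimal by (simp add: krylov.simps)
qed

lemma dim_krylov_mono: "m \<le> n \<Longrightarrow> dim (krylov m) \<le> dim (krylov n)"
  by (rule krylov_finite_span[of n], rule dim_subset_in_span[OF krylov_mono]) auto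

text \<open>Extend a basis of {v\<in>Y. A v \<in> Y} to a basis B of Y: then span (Y \<union> A ` Y) is
  spanned by B together with the images of the new basis vectors.\<close>

lemma dim_span_image_add_dim_preimage:
  assumes "Y \<subseteq> span F" "finite F"
  shows "dim (span (Y \<union> A ` Y)) + dim {v\<in>Y. A v \<in> Y} \<le> 2 * dim Y"
proof -
  define S where "S = {v\<in>Y. A v \<in> Y}"
  have "S \<subseteq> Y" unfolding S_def by auto
  obtain BS where BS: "BS \<subseteq> S" "independent BS" "S \<subseteq> span BS" "card BS = dim S" "finite BS"
    using finite_basis_in_span[of S F] assms \<open>S \<subseteq> Y\<close> by blast
  obtain BY where BY: "BS \<subseteq> BY" "BY \<subseteq> Y" "independent BY" "Y \<subseteq> span BY"
    using maximal_independent_subset_extend[of BS Y] BS \<open>S \<subseteq> Y\<close> by blast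
  have "finite BY" using independent_span_bound[OF assms(2) BY(3)] BY assms by blast
  have card_BY: "card BY = dim Y" using basis_card_eq_dim[OF BY(2,4,3)] .
  let ?R = "BY \<union> A ` (BY - BS)"
  have "A b \<in> span ?R" if "b \<in> BY" for b
  proof (cases "b \<in> BS")
    case True
    then have "A b \<in> span BY" using BS(1) BY(4) unfolding S_def by auto
    then show ?thesis using span_mono[of BY ?R] by auto
  next
    case False
    then show ?thesis using that span_superset[of ?R] by auto
  qed
  then have "span (A ` BY) \<subseteq> span ?R" by (intro span_minimal) auto
  then have "A ` Y \<subseteq> span ?R" using A_span[of BY] BY(4) by blast
  moreover have "Y \<subseteq> span ?R" using BY(4) span_mono[of BY ?R] by auto
  ultimately have "span (Y \<union> A ` Y) \<subseteq> span ?R" by (simp add: span_minimal)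
  then have "dim (span (Y \<union> A ` Y)) \<le> card ?R"
    using dim_le_card[of "span (Y \<union> A ` Y)" ?R] \<open>finite BY\<close> by auto
  also have "\<dots> \<le> card BY + card (BY - BS)"
    using card_Un_le[of BY "A ` (BY - BS)"] card_image_le[of "BY - BS" A] \<open>finite BY\<close>
    by simp
  also have "\<dots> = card BY + (card BY - card BS)"
    using card_Diff_subset[OF BS(5) BY(1)] by simp
  finally show ?thesis
    using card_BY BS(4) card_mono[OF \<open>finite BY\<close> BY(1)] unfolding S_def by linarith
qed

lemma subspace_krylov_preimage: "subspace {v\<in>krylov n. A v \<in> krylov n}"
  using subspace_krylov[of n] by (auto simp: subspace_def A_add A_scale A_zero)

lemma krylov_subset_preimage: "krylov n \<subseteq> {v\<in>krylov (Suc n). A v \<in> krylov (Suc n)}"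
  using krylov_Suc_mono A_krylov by blast

lemma dim_krylov_step:
  "dim (krylov (Suc (Suc n))) + dim {v\<in>krylov (Suc n). A v \<in> krylov (Suc n)}
     \<le> 2 * dim (krylov (Suc n))"
proof -
  obtain F where F: "finite F" "krylov (Suc n) = span F" using krylov_finite_span .
  show ?thesis
    unfolding krylov.simps(2)[of "Suc n"]
    using dim_span_image_add_dim_preimage[OF equalityD1[OF F(2)] F(1)] .
qed

definition krylov_growth :: "nat \<Rightarrow> nat" where
  "krylov_growth n = dim (krylov (Suc n)) - dim (krylov n)"

lemma dim_krylov_le_preimage:
  "dim (krylov n) \<le> dim {v\<in>krylov (Suc n). A v \<in> krylov (Suc n)}"
  by (rule krylov_finite_span[of "Suc n"], rule dim_subset_in_span[OF krylov_subset_preimage])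
    auto

lemma krylov_growth_antimono: "krylov_growth (Suc n) \<le> krylov_growth n"
  using dim_krylov_step[of n] dim_krylov_le_preimage[of n]
    dim_krylov_mono[of n "Suc n"] dim_krylov_mono[of "Suc n" "Suc (Suc n)"]
  unfolding krylov_growth_def by linarith

definition krylov_stable_from :: "nat \<Rightarrow> bool" where
  "krylov_stable_from n0 \<longleftrightarrow>
     (\<forall>n\<ge>n0. \<forall>v. v \<in> krylov (Suc n) \<longrightarrow> A v \<in> krylov (Suc n) \<longrightarrow> v \<in> krylov n)"

text \<open>The increments of dim (krylov n) decrease, by the count above, so they become
  constant; then the count is sharp and {v\<in>krylov (Suc n). A v \<in> krylov (Suc n)} shrinks to
  krylov n.\<close>

lemma krylov_eventually_stable: "\<exists>n0. krylov_stable_from n0"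
proof -
  obtain n0 where n0: "\<forall>n\<ge>n0. krylov_growth n = krylov_growth n0"
    using antimono_nat_eventually_const[of krylov_growth] krylov_growth_antimono by blast
  have "krylov n = {v\<in>krylov (Suc n). A v \<in> krylov (Suc n)}" if "n \<ge> n0" for n
  proof -
    obtain F where F: "finite F" "krylov (Suc n) = span F" using krylov_finite_span .
    have "krylov_growth (Suc n) = krylov_growth n" using n0 that le_SucI by metis
    then have "dim (krylov n) \<ge> dim {v\<in>krylov (Suc n). A v \<in> krylov (Suc n)}"
      using dim_krylov_step[of n]
        dim_krylov_mono[of n "Suc n"] dim_krylov_mono[of "Suc n" "Suc (Suc n)"]
      unfolding krylov_growth_def by linarith
    moreover have "{v\<in>krylov (Suc n). A v \<in> krylov (Suc n)} \<subseteq> span F" using F(2) by blast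
    ultimately show ?thesis
      using subspace_dim_equal_in_span[OF subspace_krylov subspace_krylov_preimage
          krylov_subset_preimage _ _ F(1)] by blast
  qed
  then show ?thesis unfolding krylov_stable_from_def by blast
qed

lemma A_pow_krylov_strict:
  assumes "krylov_stable_from n0" "n \<ge> n0" "v \<in> krylov (Suc n)" "v \<notin> krylov n"
  shows "(A ^^ i) v \<in> krylov (Suc n + i) \<and> (A ^^ i) v \<notin> krylov (n + i)"
proof (induction i)
  case 0
  then show ?case using assms by simp
next
  case (Suc i)
  then have "A ((A ^^ i) v) \<notin> krylov (Suc (n + i))"
    using assms(1,2) unfolding krylov_stable_from_def by (metis add_Suc le_add1 le_trans)
  then show ?case using Suc A_krylov by simp
qed

definition polyA :: "'a poly \<Rightarrow> 'b \<Rightarrow> 'b" where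
  "polyA p h = (\<Sum>i\<le>degree p. coeff p i *s (A ^^ i) h)"

lemma A_pow_polyA: "(A ^^ j) (polyA p h) = polyA p ((A ^^ j) h)"
  unfolding polyA_def A_pow_sum A_pow_scale A_pow_commute ..

lemma polyA_not_in_krylov:
  assumes "krylov_stable_from n0" "n \<ge> n0" "v \<in> krylov (Suc n)" "v \<notin> krylov n" "p \<noteq> 0"
  shows "polyA p v \<notin> krylov (n + degree p)"
proof
  let ?m = "degree p" and ?K = "krylov (n + degree p)"
  let ?low = "\<Sum>i<?m. coeff p i *s (A ^^ i) v"
  assume "polyA p v \<in> ?K"
  moreover have "?low \<in> ?K"
  proof (intro subspace_sum[OF subspace_krylov] subspace_scale[OF subspace_krylov])
    fix i assume "i \<in> {..<?m}"
    then show "(A ^^ i) v \<in> ?K"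
      using A_pow_krylov_strict[OF assms(1-4), of i] krylov_mono[of "Suc n + i" "n + ?m"] by auto
  qed
  ultimately have "polyA p v - ?low \<in> ?K" by (rule subspace_diff[OF subspace_krylov])
  moreover have "polyA p v - ?low = coeff p ?m *s (A ^^ ?m) v"
    unfolding polyA_def by (simp add: lessThan_Suc_atMost[symmetric])
  ultimately have "coeff p ?m *s (A ^^ ?m) v \<in> ?K" by simp
  then have "inverse (coeff p ?m) *s coeff p ?m *s (A ^^ ?m) v \<in> ?K"
    using subspace_scale[OF subspace_krylov] by blast
  then have "(A ^^ ?m) v \<in> ?K" using assms(5) by simp
  then show False using A_pow_krylov_strict[OF assms(1-4), of ?m] by blast
qed

text \<open>krylov_core N J decreases in J and becomes A-invariant once it stops decreasing,
  so eventually it is zero.\<close>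

definition krylov_core :: "nat \<Rightarrow> nat \<Rightarrow> 'b set" where
  "krylov_core N J = {h \<in> krylov N. \<forall>j\<le>J. (A ^^ j) h \<in> krylov N}"

lemma subspace_krylov_core: "subspace (krylov_core N J)"
  using subspace_krylov[of N]
  by (auto simp: krylov_core_def subspace_def A_pow_add A_pow_scale module_hom.zero[OF A_pow_hom])

lemma krylov_core_Suc_invariant:
  assumes "krylov_core N (Suc J) = krylov_core N J"
  shows "A ` krylov_core N J \<subseteq> krylov_core N J"
proof
  fix w assume "w \<in> A ` krylov_core N J"
  then obtain h where h: "h \<in> krylov_core N (Suc J)" "w = A h" using assms by blast
  have "(A ^^ j) w = (A ^^ Suc j) h" for j
    using h(2) by (simp add: funpow_Suc_right del: funpow.simps)
  then have pow_w: "(A ^^ j) w \<in> krylov N" if "j \<le> J" for j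
    using h(1) that unfolding krylov_core_def by auto
  moreover have "w \<in> krylov N" using pow_w[of 0] by simp
  ultimately show "w \<in> krylov_core N J" unfolding krylov_core_def by blast
qed

lemma krylov_nonzero_leaves: "\<exists>J. \<forall>h\<in>krylov N. h \<noteq> 0 \<longrightarrow> (\<exists>j\<le>J. (A ^^ j) h \<notin> krylov N)"
proof -
  obtain F where F: "finite F" "krylov N = span F" using krylov_finite_span .
  have core_span: "krylov_core N J \<subseteq> span F" for J using F(2) unfolding krylov_core_def by auto
  have core_Suc: "krylov_core N (Suc J) \<subseteq> krylov_core N J" for J
    unfolding krylov_core_def by auto
  have dim_Suc: "dim (krylov_core N (Suc J)) \<le> dim (krylov_core N J)" for J
    by (rule dim_subset_in_span[OF core_Suc core_span F(1)])
  obtain J where J: "\<forall>J'\<ge>J. dim (krylov_core N J') = dim (krylov_core N J)"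
    using antimono_nat_eventually_const[of "\<lambda>J. dim (krylov_core N J)", OF dim_Suc] by blast
  have "dim (krylov_core N (Suc J)) \<ge> dim (krylov_core N J)"
    using J[rule_format, of "Suc J"] by simp
  then have eq: "krylov_core N (Suc J) = krylov_core N J"
    using subspace_dim_equal_in_span[OF subspace_krylov_core subspace_krylov_core core_Suc
        _ core_span F(1)] by blast
  have "krylov_core N J \<subseteq> V" using krylov_V unfolding krylov_core_def by blast
  then have core_0: "krylov_core N J \<subseteq> {0}"
    by (rule no_invariant[OF subspace_krylov_core F(1) core_span krylov_core_Suc_invariant[OF eq]])
  show ?thesis
  proof (rule exI[of _ J], intro ballI impI)
    fix h assume "h \<in> krylov N" "h \<noteq> 0"
    then have "h \<notin> krylov_core N J" using core_0 by blast
    then show "\<exists>j\<le>J. (A ^^ j) h \<notin> krylov N"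
      using \<open>h \<in> krylov N\<close> unfolding krylov_core_def by blast
  qed
qed

lemma polyA_span_trivial:
  "\<exists>D. \<forall>p h. degree p \<ge> D \<longrightarrow> h \<in> span E \<longrightarrow> polyA p h \<in> span E \<longrightarrow> h = 0"
proof -
  obtain n0 where st: "krylov_stable_from n0" using krylov_eventually_stable by blast
  obtain J where J: "\<forall>h\<in>krylov n0. h \<noteq> 0 \<longrightarrow> (\<exists>j\<le>J. (A ^^ j) h \<notin> krylov n0)"
    using krylov_nonzero_leaves by blast
  have "h = 0" if deg: "degree p \<ge> Suc J" and h: "h \<in> span E" and ph: "polyA p h \<in> span E"
    for p h
  proof (rule ccontr)
    assume "h \<noteq> 0"
    moreover have "h \<in> krylov n0" using h krylov_mono[of 0 n0] by auto
    ultimately obtain j where j: "j \<le> J" "(A ^^ j) h \<notin> krylov n0" using J by blast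
    let ?v = "(A ^^ j) h"
    have "?v \<in> krylov j" using A_pow_krylov[of h 0 j] h by simp
    define k where "k = (LEAST k. ?v \<in> krylov k)"
    have vk: "?v \<in> krylov k" unfolding k_def by (rule LeastI) fact
    have "\<not> k \<le> n0" using vk j(2) krylov_mono by blast
    then obtain n where n: "k = Suc n" "n \<ge> n0" by (cases k) auto
    have "?v \<notin> krylov n"
      using not_less_Least[of n "\<lambda>k. ?v \<in> krylov k"] n unfolding k_def by auto
    then have "(A ^^ (J - j)) ?v \<in> krylov (Suc n + (J - j))"
      and "(A ^^ (J - j)) ?v \<notin> krylov (n + (J - j))"
      using A_pow_krylov_strict[OF st n(2)] vk n(1) by blast+
    moreover have "(A ^^ (J - j)) ?v = (A ^^ J) h"
      using j(1) by (simp add: funpow_add[symmetric, THEN fun_cong, simplified comp_def])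
    moreover have "p \<noteq> 0" using deg by auto
    ultimately have "polyA p ((A ^^ J) h) \<notin> krylov (n + (J - j) + degree p)"
      using polyA_not_in_krylov[OF st, of "n + (J - j)"] n(2) by simp
    moreover have "polyA p ((A ^^ J) h) \<in> krylov J"
      using A_pow_krylov[of "polyA p h" 0 J] ph A_pow_polyA by simp
    ultimately show False using deg krylov_mono[of J "n + (J - j) + degree p"] by auto
  qed
  then show ?thesis by blast
qed

end

interpretation functionals:
  vector_space "(\<lambda>c f x. c * f x) :: 'a::field \<Rightarrow> ((nat \<Rightarrow> 'a) \<Rightarrow> 'a) \<Rightarrow> ((nat \<Rightarrow> 'a) \<Rightarrow> 'a)"
  by unfold_locales (auto simp: fun_eq_iff algebra_simps)

lemma sum_fun_apply: "(\<Sum>i\<in>S. g i) x = (\<Sum>i\<in>S. g i x)"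
  by (induction S rule: infinite_finite_induct) auto

lemma kspan_eq_span: "kspan B = functionals.span B"
proof
  show "kspan B \<subseteq> functionals.span B"
  proof
    fix f assume "f \<in> kspan B"
    then obtain F c where F: "finite F" "F \<subseteq> B" "f = (\<lambda>x. \<Sum>g\<in>F. c g * g x)"
      unfolding kspan_def by blast
    have "f = (\<Sum>g\<in>F. (\<lambda>x. c g * g x))" using F by (simp add: fun_eq_iff sum_fun_apply)
    also have "\<dots> \<in> functionals.span B"
      using F by (intro functionals.span_sum functionals.span_scale functionals.span_base) auto
    finally show "f \<in> functionals.span B" .
  qed
  show "functionals.span B \<subseteq> kspan B"
  proof
    fix f assume "f \<in> functionals.span B"
    then obtain t r where "finite t" "t \<subseteq> B" "f = (\<Sum>a\<in>t. (\<lambda>x. r a * a x))"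
      unfolding functionals.span_explicit by blast
    then show "f \<in> kspan B" unfolding kspan_def
      by (intro CollectI exI[of _ t] exI[of _ r]) (auto simp: fun_eq_iff sum_fun_apply)
  qed
qed

lemma subspace_dual_space:
  "functionals.subspace (dual_space :: ((nat \<Rightarrow> 'a::real_normed_field) \<Rightarrow> 'a) set)"
  unfolding functionals.subspace_def dual_space_def
  by (auto simp: klinear_def zero_fun_def plus_fun_def algebra_simps intro!: continuous_intros)

lemma dual_op_dual_space:
  assumes "klinear_op T" "continuous_on UNIV T" "f \<in> dual_space"
  shows "dual_op T f \<in> dual_space"
proof -
  have "klinear (\<lambda>x. f (T x))"
    using assms unfolding klinear_def klinear_op_def dual_space_def by simp
  moreover have "continuous_on UNIV (\<lambda>x. f (T x))"
    using assms(3) continuous_on_compose2[OF _ assms(2)] unfolding dual_space_def by blast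
  ultimately show ?thesis unfolding dual_op_def dual_space_def by simp
qed

lemma coordinate_dual_space: "(\<lambda>x. x j) \<in> dual_space"
  unfolding dual_space_def klinear_def by (auto intro: continuous_on_product_coordinates)

lemma dual_op_funpow: "(dual_op T ^^ i) h = (\<lambda>x. h ((T ^^ i) x))"
  by (induction i arbitrary: h) (simp_all add: dual_op_def funpow_swap1)

lemma no_finite_invariant_dual_op:
  fixes T :: "(nat \<Rightarrow> 'a::real_normed_field) \<Rightarrow> (nat \<Rightarrow> 'a)"
  assumes lin: "klinear_op T" and cont: "continuous_on UNIV T"
    and no_inv: "no_fin_dim_dual_invariant T"
    and E: "finite E" "E \<subseteq> dual_space"
  shows "no_finite_invariant (\<lambda>c f x. c * f x) (dual_op T) dual_space E"
proof unfold_locales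
  show "functionals.subspace dual_space" by (rule subspace_dual_space)
  show "dual_op T ` dual_space \<subseteq> dual_space" using dual_op_dual_space[OF lin cont] by blast
next
  fix L F
  assume L: "functionals.subspace L" "finite F" "L \<subseteq> functionals.span F"
    "dual_op T ` L \<subseteq> L" "L \<subseteq> dual_space"
  have "dual_subspace L"
    using L(1,5) unfolding dual_subspace_def functionals.subspace_def
    by (simp add: zero_fun_def plus_fun_def)
  moreover have "finite_dim L" unfolding finite_dim_def using L(2,3) kspan_eq_span by blast
  ultimately have "L = {\<lambda>x. 0}" using no_inv L(4) unfolding no_fin_dim_dual_invariant_def by blast
  then show "L \<subseteq> {0}" by (simp add: zero_fun_def)
qed (use E in \<open>auto simp: dual_op_def\<close>)

lemma coordinate_combination_in_span:
  "(\<lambda>x. \<Sum>j<N. e j * x j) \<in> functionals.span ((\<lambda>j x. x j) ` {..<N})"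
proof -
  have "(\<lambda>x. \<Sum>j<N. e j * x j) = (\<Sum>j<N. (\<lambda>x. e j * x j))"
    by (simp add: fun_eq_iff sum_fun_apply)
  also have "\<dots> \<in> functionals.span ((\<lambda>j x. x j) ` {..<N})"
    by (intro functionals.span_sum functionals.span_scale functionals.span_base) auto
  finally show ?thesis .
qed

lemma coordinate_combination_zero:
  fixes c :: "nat \<Rightarrow> 'a::semiring_1"
  assumes "(\<lambda>x. \<Sum>j<N. c j * x j) = (\<lambda>x. 0)" "j < N"
  shows "c j = 0"
proof -
  have "(\<Sum>i<N. c i * (if i = j then 1 else 0)) = 0"
    using fun_cong[OF assms(1), of "\<lambda>i. if i = j then 1 else 0"] by simp
  then show ?thesis using assms(2) by (simp add: if_distrib cong: if_cong)
qed

lemma poly_op_coordinate_relation_trivial: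
  fixes T :: "(nat \<Rightarrow> 'a::real_normed_field) \<Rightarrow> (nat \<Rightarrow> 'a)"
  assumes "klinear_op T" "continuous_on UNIV T" "no_fin_dim_dual_invariant T"
  shows "\<exists>D. \<forall>p c d. degree p \<ge> D \<longrightarrow>
           (\<forall>x. (\<Sum>j<N. c j * poly_op p T x j) = (\<Sum>j<N. d j * x j)) \<longrightarrow> (\<forall>j<N. c j = 0)"
proof -
  let ?E = "(\<lambda>j x. x j) ` {..<N}"
  interpret no_finite_invariant "\<lambda>c f x. c * f x" "dual_op T" dual_space ?E
    by (rule no_finite_invariant_dual_op[OF assms]) (auto intro: coordinate_dual_space)
  obtain D where D: "\<forall>p h. degree p \<ge> D \<longrightarrow> h \<in> functionals.span ?E \<longrightarrow>
      polyA p h \<in> functionals.span ?E \<longrightarrow> h = 0"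
    using polyA_span_trivial by blast
  have "\<forall>j<N. c j = 0"
    if "degree p \<ge> D" and rel: "\<forall>x. (\<Sum>j<N. c j * poly_op p T x j) = (\<Sum>j<N. d j * x j)"
    for p c d
  proof -
    let ?h = "\<lambda>x. \<Sum>j<N. c j * x j"
    have "polyA p ?h = (\<lambda>x. \<Sum>i\<le>degree p. coeff p i * ?h ((T ^^ i) x))"
      unfolding polyA_def by (simp add: fun_eq_iff sum_fun_apply dual_op_funpow)
    also have "\<dots> = (\<lambda>x. \<Sum>j<N. c j * poly_op p T x j)"
      unfolding poly_op_def
      by (simp add: fun_eq_iff sum_distrib_left mult_ac sum.swap[of _ "{..<N}"])
    also have "\<dots> = (\<lambda>x. \<Sum>j<N. d j * x j)" using rel by simp
    finally have "polyA p ?h \<in> functionals.span ?E" using coordinate_combination_in_span by simp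
    then have "?h = 0" using D that(1) coordinate_combination_in_span by blast
    then have "?h = (\<lambda>x. 0)" by (simp add: zero_fun_def)
    then show ?thesis using coordinate_combination_zero by blast
  qed
  then show ?thesis by blast
qed

locale linear_functionals =
  fixes Z :: "(nat \<Rightarrow> 'a::field) set" and \<phi> :: "nat \<Rightarrow> (nat \<Rightarrow> 'a) \<Rightarrow> 'a"
  assumes zero_Z: "(\<lambda>n. 0) \<in> Z"
    and add_Z: "\<And>x y. x \<in> Z \<Longrightarrow> y \<in> Z \<Longrightarrow> (\<lambda>n. x n + y n) \<in> Z"
    and scale_Z: "\<And>c x. x \<in> Z \<Longrightarrow> (\<lambda>n. c * x n) \<in> Z"
    and \<phi>_add: "\<And>j x y. x \<in> Z \<Longrightarrow> y \<in> Z \<Longrightarrow> \<phi> j (\<lambda>n. x n + y n) = \<phi> j x + \<phi> j y"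
    and \<phi>_scale: "\<And>j c x. x \<in> Z \<Longrightarrow> \<phi> j (\<lambda>n. c * x n) = c * \<phi> j x"
begin

definition independent_upto :: "nat \<Rightarrow> bool" where
  "independent_upto m \<longleftrightarrow> (\<forall>c. (\<forall>z\<in>Z. (\<Sum>j<m. c j * \<phi> j z) = 0) \<longrightarrow> (\<forall>j<m. c j = 0))"

lemma sum_Z: "(\<And>i. i \<in> S \<Longrightarrow> g i \<in> Z) \<Longrightarrow> (\<lambda>n. \<Sum>i\<in>S. g i n) \<in> Z"
proof (induction S rule: infinite_finite_induct)
  case (insert i S)
  then have "(\<lambda>n. g i n + (\<Sum>i\<in>S. g i n)) \<in> Z" using add_Z by blast
  then show ?case using insert by simp
qed (use zero_Z in auto)

lemma \<phi>_sum: "(\<And>i. i \<in> S \<Longrightarrow> g i \<in> Z) \<Longrightarrow> \<phi> j (\<lambda>n. \<Sum>i\<in>S. g i n) = (\<Sum>i\<in>S. \<phi> j (g i))"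
proof (induction S rule: infinite_finite_induct)
  case (insert i S)
  then have "\<phi> j (\<lambda>n. g i n + (\<Sum>i\<in>S. g i n)) = \<phi> j (g i) + \<phi> j (\<lambda>n. \<Sum>i\<in>S. g i n)"
    by (intro \<phi>_add sum_Z) auto
  then show ?case using insert by simp
qed (use \<phi>_scale[OF zero_Z, of _ 0] in auto)

lemma independent_upto_Suc: "independent_upto (Suc m) \<Longrightarrow> independent_upto m"
  unfolding independent_upto_def
proof (intro allI impI)
  fix c j
  assume ind: "\<forall>c. (\<forall>z\<in>Z. (\<Sum>j<Suc m. c j * \<phi> j z) = 0) \<longrightarrow> (\<forall>j<Suc m. c j = 0)"
    and c: "\<forall>z\<in>Z. (\<Sum>j<m. c j * \<phi> j z) = 0" and "j < m"
  have "(\<Sum>j<Suc m. (c(m := 0)) j * \<phi> j z) = (\<Sum>j<m. c j * \<phi> j z)" for z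
    by (auto intro!: sum.cong)
  then have "\<forall>z\<in>Z. (\<Sum>j<Suc m. (c(m := 0)) j * \<phi> j z) = 0" using c by simp
  then have "\<forall>j<Suc m. (c(m := 0)) j = 0" using ind by blast
  then show "c j = 0" using \<open>j < m\<close> by (metis fun_upd_other less_SucI less_irrefl)
qed

text \<open>The coefficients of the relation are the values of \<phi> m at interpolants of the
  unit vectors.\<close>

lemma relation_if_kernel_contained:
  assumes sol: "\<And>t. \<exists>z\<in>Z. \<forall>j<m. \<phi> j z = t j"
    and ker: "\<And>z. z \<in> Z \<Longrightarrow> \<forall>j<m. \<phi> j z = 0 \<Longrightarrow> \<phi> m z = 0"
  shows "\<exists>c. c m = 1 \<and> (\<forall>z\<in>Z. (\<Sum>j<Suc m. c j * \<phi> j z) = 0)"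
proof -
  obtain sol where sol: "\<And>t. sol t \<in> Z" "\<And>t j. j < m \<Longrightarrow> \<phi> j (sol t) = t j"
    using sol by metis
  define e where "e i = sol (\<lambda>j. if j = i then 1 else 0)" for i
  have e: "e i \<in> Z" "j < m \<Longrightarrow> \<phi> j (e i) = (if j = i then 1 else 0)" for i j
    unfolding e_def using sol by simp_all
  define c where "c j = (if j < m then - \<phi> m (e j) else 1)" for j
  have "(\<Sum>j<Suc m. c j * \<phi> j z) = 0" if z: "z \<in> Z" for z
  proof -
    let ?s = "\<lambda>n. \<Sum>i<m. \<phi> i z * e i n"
    let ?w = "\<lambda>n. z n + (-1) * ?s n"
    have s_Z: "?s \<in> Z" by (intro sum_Z scale_Z e(1))
    then have w_Z: "?w \<in> Z" by (intro add_Z scale_Z z)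
    have \<phi>_s: "\<phi> j ?s = (\<Sum>i<m. \<phi> i z * \<phi> j (e i))" for j
      by (simp add: \<phi>_sum scale_Z e(1) \<phi>_scale)
    have \<phi>_w: "\<phi> j ?w = \<phi> j z - \<phi> j ?s" for j
      by (simp only: \<phi>_add[OF z scale_Z[OF s_Z]] \<phi>_scale[OF s_Z]) simp
    have "\<phi> j ?w = 0" if "j < m" for j
    proof -
      have "\<phi> j ?s = \<phi> j z" using that by (simp add: \<phi>_s e(2) if_distrib cong: if_cong)
      then show ?thesis using \<phi>_w[of j] by simp
    qed
    then have "\<phi> m ?w = 0" using ker w_Z by blast
    then have "\<phi> m z = (\<Sum>i<m. \<phi> i z * \<phi> m (e i))" using \<phi>_w \<phi>_s by simp
    then show ?thesis unfolding c_def by (simp add: sum_negf mult_ac)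
  qed
  moreover have "c m = 1" unfolding c_def by simp
  ultimately show ?thesis by blast
qed

lemma surjective_if_independent_upto:
  "independent_upto m \<Longrightarrow> \<exists>z\<in>Z. \<forall>j<m. \<phi> j z = t j"
proof (induction m arbitrary: t)
  case 0
  then show ?case using zero_Z by auto
next
  case (Suc m)
  then have sol: "\<And>t. \<exists>z\<in>Z. \<forall>j<m. \<phi> j z = t j" using independent_upto_Suc by blast
  show ?case
  proof (cases "\<exists>z0\<in>Z. (\<forall>j<m. \<phi> j z0 = 0) \<and> \<phi> m z0 \<noteq> 0")
    case True
    then obtain z0 where z0: "z0 \<in> Z" "\<forall>j<m. \<phi> j z0 = 0" "\<phi> m z0 \<noteq> 0" by blast
    obtain z1 where z1: "z1 \<in> Z" "\<forall>j<m. \<phi> j z1 = t j" using sol by blast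
    let ?a = "(t m - \<phi> m z1) / \<phi> m z0"
    let ?z = "\<lambda>n. z1 n + ?a * z0 n"
    have "\<phi> j ?z = \<phi> j z1 + ?a * \<phi> j z0" for j
      by (simp only: \<phi>_add[OF z1(1) scale_Z[OF z0(1)]] \<phi>_scale[OF z0(1)])
    then have "\<forall>j<Suc m. \<phi> j ?z = t j" using z0 z1 by (auto simp: less_Suc_eq)
    moreover have "?z \<in> Z" by (intro add_Z scale_Z z0(1) z1(1))
    ultimately show ?thesis by blast
  next
    case False
    then obtain c where "c m = 1" "\<forall>z\<in>Z. (\<Sum>j<Suc m. c j * \<phi> j z) = 0"
      using relation_if_kernel_contained[OF sol] by blast
    moreover have "c m = 0"
      using Suc.prems calculation(2) unfolding independent_upto_def by blast
    ultimately show ?thesis by simp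
  qed
qed

end

lemma klinear_op_add: "klinear_op T \<Longrightarrow> T (\<lambda>n. x n + y n) = (\<lambda>n. T x n + T y n)"
  unfolding klinear_op_def by blast

lemma klinear_op_scale: "klinear_op T \<Longrightarrow> T (\<lambda>n. c * x n) = (\<lambda>n. c * T x n)"
  unfolding klinear_op_def by blast

lemma klinear_op_zero: "klinear_op T \<Longrightarrow> T (\<lambda>n. 0) = (\<lambda>n. 0)"
  using klinear_op_scale[of T 0 "\<lambda>n. 0"] by simp

lemma klinear_op_funpow: "klinear_op T \<Longrightarrow> klinear_op (T ^^ i)"
proof (induction i)
  case (Suc i)
  then show ?case unfolding klinear_op_def by (simp add: klinear_op_add klinear_op_scale)
qed (simp add: klinear_op_def)

lemma klinear_op_sum:
  assumes "klinear_op T"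
  shows "T (\<lambda>n. \<Sum>i\<in>S. g i n) = (\<lambda>m. \<Sum>i\<in>S. T (g i) m)"
proof (induction S rule: infinite_finite_induct)
  case (insert i S)
  have "T (\<lambda>n. \<Sum>i\<in>insert i S. g i n) = T (\<lambda>n. g i n + (\<Sum>i\<in>S. g i n))"
    using insert by simp
  also have "\<dots> = (\<lambda>m. T (g i) m + T (\<lambda>n. \<Sum>i\<in>S. g i n) m)"
    by (rule klinear_op_add[OF assms])
  finally show ?case using insert by simp
qed (use klinear_op_zero[OF assms] in auto)

lemma klinear_op_poly_op:
  fixes T :: "(nat \<Rightarrow> 'a::real_normed_field) \<Rightarrow> (nat \<Rightarrow> 'a)"
  assumes "klinear_op T"
  shows "klinear_op (poly_op p T)"
  unfolding klinear_op_def poly_op_def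
  using klinear_op_funpow[OF assms]
  by (auto simp: fun_eq_iff klinear_op_add klinear_op_scale
      algebra_simps sum.distrib sum_distrib_left)

lemma continuous_on_funpow:
  fixes T :: "'a::topological_space \<Rightarrow> 'a"
  assumes "continuous_on UNIV T"
  shows "continuous_on UNIV (T ^^ i)"
proof (induction i)
  case (Suc i)
  have "continuous_on UNIV (T \<circ> (T ^^ i))"
    using continuous_on_compose[OF Suc] continuous_on_subset[OF assms] by blast
  then show ?case by simp
qed (simp add: id_def)

lemma continuous_on_poly_op:
  fixes T :: "(nat \<Rightarrow> 'a::real_normed_field) \<Rightarrow> (nat \<Rightarrow> 'a)"
  assumes "continuous_on UNIV T"
  shows "continuous_on UNIV (poly_op p T)"
  unfolding poly_op_def
proof (intro continuous_on_coordinatewise_then_product continuous_intros)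
  show "continuous_on UNIV (\<lambda>x. (T ^^ i) x m)" for m i
    using continuous_on_compose2[OF continuous_on_product_coordinates[of m]
        continuous_on_funpow[OF assms, of i]] by simp
qed

lemma tendsto_fun_componentwise:
  "((f :: 'x \<Rightarrow> 'i \<Rightarrow> 'b::topological_space) \<longlongrightarrow> l) F \<longleftrightarrow> (\<forall>i. ((\<lambda>c. f c i) \<longlongrightarrow> l i) F)"
  using limitin_componentwise[of "\<lambda>i. euclidean" UNIV f l F]
  by (simp add: euclidean_product_topology)

lemma dense_iff_meets_open:
  "closure S = (UNIV :: 'a::topological_space set) \<longleftrightarrow>
     (\<forall>U. open U \<longrightarrow> U \<noteq> {} \<longrightarrow> U \<inter> S \<noteq> {})"
  by (metis Compl_disjoint2 boolean_algebra.conj_one_right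
      boolean_algebra_class.boolean_algebra.compl_eq_compl_iff closed_closure
      open_Compl open_Int_closure_eq_empty)

text \<open>Birkhoff's transitivity theorem: the points with a dense orbit contain the
  intersection of the open dense sets \<Union>k. P k -` B, B ranging over a countable basis.\<close>

lemma dense_orbit_if_transitive:
  fixes P :: "nat \<Rightarrow> 'a::polish_space \<Rightarrow> 'a"
  assumes cont: "\<And>k. continuous_on UNIV (P k)"
    and trans: "\<And>U V. open U \<Longrightarrow> open V \<Longrightarrow> U \<noteq> {} \<Longrightarrow> V \<noteq> {} \<Longrightarrow> \<exists>k. \<exists>y\<in>U. P k y \<in> V"
  shows "\<exists>x. closure {P k x | k. True} = UNIV"
proof -
  obtain \<B> :: "'a set set" where "countable \<B>" and basis: "topological_basis \<B>"
    using ex_countable_basis by blast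
  define G where "G B = (\<Union>k. P k -` B)" for B
  have open_G: "open (G B)" if "B \<in> \<B>" for B
  proof -
    have "open (P k -` B)" for k
      using cont[of k] that basis open_vimage topological_basis_open by blast
    then show ?thesis unfolding G_def by auto
  qed
  have dense_G: "closure (G B) = UNIV" if B: "B \<in> \<B>" "B \<noteq> {}" for B
    unfolding dense_iff_meets_open
  proof (intro allI impI)
    fix U :: "'a set" assume "open U" "U \<noteq> {}"
    then obtain k y where "y \<in> U" "P k y \<in> B"
      using trans[of U B] B basis topological_basis_open by blast
    then show "U \<inter> G B \<noteq> {}" unfolding G_def by blast
  qed
  have "Met_TC.mtopology closure_of \<Inter>(G ` (\<B> - {{}})) = (UNIV :: 'a set)"
  proof (rule Met_TC.metric_Baire_category)
    show "Met_TC.mcomplete TYPE('a)" using complete_UNIV by simp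
    show "countable (G ` (\<B> - {{}}))" using \<open>countable \<B>\<close> by simp
    fix T assume "T \<in> G ` (\<B> - {{}})"
    then show "openin Met_TC.mtopology T \<and> Met_TC.mtopology closure_of T = UNIV"
      using open_G dense_G by (auto simp: euclidean_closure_of)
  qed
  then have "closure (\<Inter>(G ` (\<B> - {{}}))) = UNIV" by (simp add: euclidean_closure_of)
  then obtain x where x: "x \<in> \<Inter>(G ` (\<B> - {{}}))"
    by (metis UNIV_I closure_empty empty_iff equals0I)
  show ?thesis
  proof (intro exI, unfold dense_iff_meets_open, intro allI impI)
    fix U :: "'a set" assume "open U" "U \<noteq> {}"
    then obtain B where "B \<in> \<B>" "B \<noteq> {}" "B \<subseteq> U"
      by (metis basis ex_in_conv topological_basisE)
    then show "U \<inter> {P k x | k. True} \<noteq> {}" using x unfolding G_def by blast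
  qed
qed

lemma transitive_if_interpolating:
  fixes P :: "nat \<Rightarrow> (nat \<Rightarrow> 'a::topological_space) \<Rightarrow> (nat \<Rightarrow> 'a)"
  assumes interp: "\<And>N u v. \<exists>k y. (\<forall>j<N. y j = u j) \<and> (\<forall>j<N. P k y j = v j)"
    and "open U" "open V" "u \<in> U" "v \<in> V"
  shows "\<exists>k. \<exists>y\<in>U. P k y \<in> V"
proof -
  obtain k y where ky: "\<And>N. (\<forall>j<N. y N j = u j) \<and> (\<forall>j<N. P (k N) (y N) j = v j)"
    using interp[of _ u v] by metis
  have "eventually (\<lambda>N. y N j = u j) sequentially" for j
    unfolding eventually_sequentially using ky by (intro exI[of _ "Suc j"]) auto
  then have "(y \<longlongrightarrow> u) sequentially"
    unfolding tendsto_fun_componentwise by (auto intro: tendsto_eventually)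
  then have "eventually (\<lambda>N. y N \<in> U) sequentially"
    using assms(2,4) topological_tendstoD by blast
  moreover
  have "eventually (\<lambda>N. P (k N) (y N) j = v j) sequentially" for j
    unfolding eventually_sequentially using ky by (intro exI[of _ "Suc j"]) auto
  then have "((\<lambda>N. P (k N) (y N)) \<longlongrightarrow> v) sequentially"
    unfolding tendsto_fun_componentwise by (auto intro: tendsto_eventually)
  then have "eventually (\<lambda>N. P (k N) (y N) \<in> V) sequentially"
    using assms(3,5) topological_tendstoD by blast
  ultimately obtain N where "y N \<in> U" "P (k N) (y N) \<in> V"
    using eventually_happens'[OF sequentially_bot eventually_conj] by blast
  then show ?thesis by blast
qed

lemma relation_on_coordinate_kernel:
  fixes P :: "(nat \<Rightarrow> 'a::real_normed_field) \<Rightarrow> (nat \<Rightarrow> 'a)"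
  assumes lin: "klinear_op P"
    and ker: "\<And>z. \<forall>j<N. z j = 0 \<Longrightarrow> (\<Sum>j<N. c j * P z j) = 0"
  shows "\<exists>d. \<forall>x. (\<Sum>j<N. c j * P x j) = (\<Sum>j<N. d j * x j)"
proof -
  define \<delta> where "\<delta> i = (\<lambda>n::nat. if n = i then (1::'a) else 0)" for i
  define d where "d i = (\<Sum>j<N. c j * P (\<delta> i) j)" for i
  have "(\<Sum>j<N. c j * P x j) = (\<Sum>j<N. d j * x j)" for x
  proof -
    define x' where "x' = (\<lambda>n. \<Sum>i<N. x i * \<delta> i n)"
    define z where "z = (\<lambda>n. x n + (-1) * x' n)"
    have x'_eq: "x' n = (if n < N then x n else 0)" for n
      unfolding x'_def \<delta>_def by (simp add: if_distrib cong: if_cong)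
    have "x = (\<lambda>n. x' n + z n)" unfolding z_def by simp
    then have "P x j = P x' j + P z j" for j
      by (metis klinear_op_add[OF lin])
    moreover have "P x' j = (\<Sum>i<N. x i * P (\<delta> i) j)" for j
      unfolding x'_def klinear_op_sum[OF lin] klinear_op_scale[OF lin] by simp
    moreover have "(\<Sum>j<N. c j * P z j) = 0" by (rule ker) (simp add: z_def x'_eq)
    ultimately have "(\<Sum>j<N. c j * P x j) = (\<Sum>j<N. \<Sum>i<N. x i * (c j * P (\<delta> i) j))"
      by (simp add: algebra_simps sum.distrib sum_distrib_left)
    also have "\<dots> = (\<Sum>i<N. \<Sum>j<N. x i * (c j * P (\<delta> i) j))" by (rule sum.swap)
    also have "\<dots> = (\<Sum>j<N. d j * x j)"
      unfolding d_def by (simp add: sum_distrib_left sum_distrib_right mult_ac)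
    finally show ?thesis .
  qed
  then show ?thesis by blast
qed

lemma poly_op_interpolating:
  fixes T :: "(nat \<Rightarrow> 'a::real_normed_field) \<Rightarrow> (nat \<Rightarrow> 'a)"
  assumes lin: "klinear_op T" and cont: "continuous_on UNIV T"
    and no_inv: "no_fin_dim_dual_invariant T"
    and deg: "filterlim (\<lambda>k. degree (p k)) at_top sequentially"
  shows "\<exists>k y. (\<forall>j<N. y j = u j) \<and> (\<forall>j<N. poly_op (p k) T y j = v j)"
proof -
  obtain D where D: "\<forall>p c d. degree p \<ge> D \<longrightarrow>
      (\<forall>x. (\<Sum>j<N. c j * poly_op p T x j) = (\<Sum>j<N. d j * x j)) \<longrightarrow> (\<forall>j<N. c j = 0)"
    using poly_op_coordinate_relation_trivial[OF lin cont no_inv] by blast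
  have "eventually (\<lambda>k. D \<le> degree (p k)) sequentially"
    using deg unfolding filterlim_at_top by blast
  then obtain k where k: "degree (p k) \<ge> D"
    using eventually_sequentially by auto
  define P where "P = poly_op (p k) T"
  have lin_P: "klinear_op P" unfolding P_def by (rule klinear_op_poly_op[OF lin])
  define Z where "Z = {z :: nat \<Rightarrow> 'a. \<forall>j<N. z j = 0}"
  interpret linear_functionals Z "\<lambda>j z. P z j"
    by unfold_locales (auto simp: Z_def klinear_op_add[OF lin_P] klinear_op_scale[OF lin_P])
  have "independent_upto N"
    unfolding independent_upto_def
  proof (rule allI, rule impI)
    fix c assume "\<forall>z\<in>Z. (\<Sum>j<N. c j * P z j) = 0"
    then obtain d where "\<forall>x. (\<Sum>j<N. c j * P x j) = (\<Sum>j<N. d j * x j)"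
      using relation_on_coordinate_kernel[OF lin_P] unfolding Z_def by blast
    then show "\<forall>j<N. c j = 0" using D k unfolding P_def by blast
  qed
  then obtain z where z: "z \<in> Z" "\<forall>j<N. P z j = v j - P u j"
    using surjective_if_independent_upto[of N "\<lambda>j. v j - P u j"] by blast
  define y where "y = (\<lambda>n. u n + z n)"
  have "\<forall>j<N. y j = u j" using z(1) unfolding y_def Z_def by simp
  moreover have "\<forall>j<N. P y j = v j" unfolding y_def klinear_op_add[OF lin_P] using z(2) by simp
  ultimately show ?thesis unfolding P_def by blast
qed

lemma no_fin_dim_dual_invariant_imp_poly_seq_dense:
  fixes T :: "(nat \<Rightarrow> 'a::{real_normed_field, polish_space}) \<Rightarrow> (nat \<Rightarrow> 'a)"
  assumes "klinear_op T" "continuous_on UNIV T" "no_fin_dim_dual_invariant T"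
  shows "poly_seq_dense T"
  unfolding poly_seq_dense_def
proof (intro allI impI)
  fix p :: "nat \<Rightarrow> 'a poly"
  assume "filterlim (\<lambda>k. degree (p k)) at_top sequentially"
  then have "\<exists>k. \<exists>y\<in>U. poly_op (p k) T y \<in> V"
    if "open U" "open V" "U \<noteq> {}" "V \<noteq> {}" for U V
    using that transitive_if_interpolating[OF poly_op_interpolating[OF assms]] by blast
  then show "\<exists>x. closure {poly_op (p k) T x | k. True} = UNIV"
    by (intro dense_orbit_if_transitive continuous_on_poly_op assms(2))
qed

lemma poly_op_monom_1:
  fixes T :: "(nat \<Rightarrow> 'a::real_normed_field) \<Rightarrow> (nat \<Rightarrow> 'a)"
  shows "poly_op (monom 1 n) T x = (T ^^ n) x"
proof -
  have "(\<Sum>i\<le>n. coeff (monom (1::'a) n) i * (T ^^ i) x m) =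
      (\<Sum>i\<le>n. if i = n then (T ^^ i) x m else 0)" for m
    by (intro sum.cong) auto
  then show ?thesis by (simp add: fun_eq_iff poly_op_def degree_monom_eq)
qed

lemma poly_seq_dense_imp_hereditarily_hypercyclic:
  fixes T :: "(nat \<Rightarrow> 'a::real_normed_field) \<Rightarrow> (nat \<Rightarrow> 'a)"
  assumes "poly_seq_dense T"
  shows "hereditarily_hypercyclic T"
  unfolding hereditarily_hypercyclic_def
proof (intro allI impI)
  fix A :: "nat set" assume A: "infinite A"
  define p where "p k = monom (1::'a) (enumerate A k)" for k
  have "degree (p k) = enumerate A k" for k unfolding p_def by (simp add: degree_monom_eq)
  then have "filterlim (\<lambda>k. degree (p k)) at_top sequentially"
    using filterlim_subseq[OF strict_mono_enumerate[OF A]] by simp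
  then obtain x where x: "closure {poly_op (p k) T x | k. True} = UNIV"
    using assms unfolding poly_seq_dense_def by blast
  have "{poly_op (p k) T x | k. True} = (\<lambda>n. (T ^^ n) x) ` range (enumerate A)"
    unfolding p_def poly_op_monom_1 by auto
  also have "\<dots> = {(T ^^ n) x | n. n \<in> A}" using range_enumerate[OF A] by auto
  finally show "\<exists>x. closure {(T ^^ n) x | n. n \<in> A} = UNIV" using x by auto
qed

lemma hereditarily_hypercyclic_imp_hypercyclic:
  "hereditarily_hypercyclic T \<Longrightarrow> hypercyclic T"
  unfolding hereditarily_hypercyclic_def hypercyclic_def
  by (drule spec[of _ UNIV]) simp

definition annihilates ::
  "((nat \<Rightarrow> 'a::real_normed_field) \<Rightarrow> (nat \<Rightarrow> 'a)) \<Rightarrow> ((nat \<Rightarrow> 'a) \<Rightarrow> 'a) \<Rightarrow> 'a poly \<Rightarrow> bool" where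
  "annihilates T f q \<longleftrightarrow> (\<forall>x. (\<Sum>i\<le>degree q. coeff q i * f ((T ^^ i) x)) = 0)"

lemma sum_atMost_coeff_degree:
  fixes q :: "'a::comm_ring_1 poly"
  assumes "degree q \<le> M"
  shows "(\<Sum>i\<le>M. coeff q i * s i) = (\<Sum>i\<le>degree q. coeff q i * s i)"
  by (rule sum.mono_neutral_right) (use assms in \<open>auto simp: coeff_eq_0\<close>)

lemma annihilating_poly_of_relation:
  assumes I: "finite I" "u i0 \<noteq> 0" "i0 \<in> I"
    and rel: "\<And>x. (\<Sum>i\<in>I. u i * f ((T ^^ i) x)) = 0"
  shows "\<exists>q. q \<noteq> 0 \<and> annihilates T f q"
proof -
  define q where "q = (\<Sum>i\<in>I. monom (u i) i)"
  have coeff_q: "coeff q l = (if l \<in> I then u l else 0)" for l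
    unfolding q_def coeff_sum using I(1) by (simp add: if_distrib cong: if_cong)
  then have "q \<noteq> 0" using I(2,3) by (metis coeff_0)
  have I_M: "I \<subseteq> {..Max I}" using I(1) by auto
  have deg_q: "degree q \<le> Max I" by (rule degree_le) (use coeff_q I_M in \<open>auto simp: subset_eq\<close>)
  have "annihilates T f q" unfolding annihilates_def
  proof
    fix x
    have "(\<Sum>l\<le>degree q. coeff q l * f ((T ^^ l) x)) = (\<Sum>l\<le>Max I. coeff q l * f ((T ^^ l) x))"
      using sum_atMost_coeff_degree[OF deg_q] by simp
    also have "\<dots> = (\<Sum>l\<le>Max I. if l \<in> I then u l * f ((T ^^ l) x) else 0)"
      by (intro sum.cong refl) (simp add: coeff_q)
    also have "\<dots> = (\<Sum>l\<in>{..Max I} \<inter> I. u l * f ((T ^^ l) x))"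
      by (simp add: sum.inter_restrict)
    also have "\<dots> = (\<Sum>l\<in>I. u l * f ((T ^^ l) x))" using Int_absorb1[OF I_M] by simp
    finally show "(\<Sum>l\<le>degree q. coeff q l * f ((T ^^ l) x)) = 0" using rel by simp
  qed
  then show ?thesis using \<open>q \<noteq> 0\<close> by blast
qed

text \<open>The orbit of f under T' lies in a finite dimensional space, so it repeats itself or
  is linearly dependent.\<close>

lemma annihilating_poly_exists:
  fixes T :: "(nat \<Rightarrow> 'a::real_normed_field) \<Rightarrow> (nat \<Rightarrow> 'a)"
  assumes "finite_dim L" "dual_op T ` L \<subseteq> L" "f \<in> L"
  shows "\<exists>q. q \<noteq> 0 \<and> annihilates T f q"
proof -
  obtain B where B: "finite B" "L \<subseteq> kspan B" using assms(1) unfolding finite_dim_def by blast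
  define g where "g i = (dual_op T ^^ i) f" for i
  have g_L: "g i \<in> L" for i
    unfolding g_def by (induction i) (use assms(2,3) in auto)
  have g_apply: "g i x = f ((T ^^ i) x)" for i x unfolding g_def dual_op_funpow by simp
  have g_span: "range g \<subseteq> functionals.span B" using g_L B(2) kspan_eq_span by blast
  show ?thesis
  proof (cases "inj g")
    case False
    then obtain i j where ij: "i \<noteq> j" "g i = g j" unfolding inj_def by blast
    have "(\<Sum>k\<in>{i, j}. (if k = i then 1 else -1) * f ((T ^^ k) x)) = 0" for x
      using ij by (simp add: g_apply[symmetric])
    then show ?thesis
      by (intro annihilating_poly_of_relation[of "{i, j}" "\<lambda>k. if k = i then 1 else -1" i]) auto
  next
    case True
    have "\<not> functionals.independent (range g)"
    proof
      assume "functionals.independent (range g)"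
      then have "finite (range g)" using functionals.independent_span_bound[OF B(1) _ g_span] by blast
      then show False using True finite_imageD by (metis infinite_UNIV_nat)
    qed
    then obtain t u where t: "finite t" "t \<subseteq> range g" "(\<Sum>v\<in>t. (\<lambda>x. u v * v x)) = 0"
      and "\<exists>v\<in>t. u v \<noteq> 0"
      unfolding functionals.dependent_explicit by blast
    then obtain i0 where i0: "g i0 \<in> t" "u (g i0) \<noteq> 0" by blast
    define I where "I = g -` t"
    have "finite I" unfolding I_def using t(1) True by (simp add: finite_vimageI)
    have "g ` I = t" unfolding I_def using t(2) by blast
    have "inj_on g I" using True by (simp add: inj_on_def inj_def)
    have "(\<Sum>i\<in>I. u (g i) * f ((T ^^ i) x)) = 0" for x
    proof -
      have "(\<Sum>i\<in>I. u (g i) * f ((T ^^ i) x)) = (\<Sum>v\<in>t. u v * v x)"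
        using sum.reindex[OF \<open>inj_on g I\<close>, of "\<lambda>v. u v * v x"] \<open>g ` I = t\<close>
        by (simp add: g_apply)
      also have "\<dots> = 0" using fun_cong[OF t(3), of x] by (simp add: sum_fun_apply)
      finally show ?thesis .
    qed
    moreover have "i0 \<in> I" unfolding I_def using i0(1) by simp
    ultimately show ?thesis
      using annihilating_poly_of_relation[OF \<open>finite I\<close>, of "u \<circ> g" i0] i0(2) by simp
  qed
qed

lemma annihilating_poly_minimal_exists:
  assumes "\<exists>q. q \<noteq> 0 \<and> annihilates T f q"
  obtains q where "q \<noteq> 0" "annihilates T f q"
    "\<And>r. r \<noteq> 0 \<Longrightarrow> annihilates T f r \<Longrightarrow> degree q \<le> degree r"
proof -
  define m where "m = (LEAST m. \<exists>q. q \<noteq> 0 \<and> degree q = m \<and> annihilates T f q)"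
  obtain q where "q \<noteq> 0" "degree q = m" "annihilates T f q"
    using LeastI_ex[of "\<lambda>m. \<exists>q. q \<noteq> 0 \<and> degree q = m \<and> annihilates T f q"] assms
    unfolding m_def by blast
  moreover have "m \<le> degree r" if "r \<noteq> 0" "annihilates T f r" for r
    unfolding m_def using that by (intro Least_le) blast
  ultimately show ?thesis using that by auto
qed

lemma degree_annihilator_pos:
  assumes "annihilates T f q" "q \<noteq> 0" "f \<noteq> (\<lambda>x. 0)"
  shows "degree q \<ge> 1"
proof (rule ccontr)
  assume "\<not> degree q \<ge> 1"
  then have "degree q = 0" by simp
  then have "coeff q 0 * f x = 0" for x using assms(1) unfolding annihilates_def by auto
  moreover have "coeff q 0 \<noteq> 0" using assms(2) \<open>degree q = 0\<close> by (metis leading_coeff_0_iff)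
  ultimately show False using assms(3) by auto
qed

lemma sum_coeff_linear_factor:
  fixes r :: "'a::comm_ring_1 poly"
  assumes "degree r \<le> n"
  shows "(\<Sum>i\<le>Suc n. coeff ([:-lam, 1:] * r) i * s i)
           = (\<Sum>i\<le>n. coeff r i * s (Suc i)) - lam * (\<Sum>i\<le>n. coeff r i * s i)"
proof -
  have "[:-lam, 1:] * r = pCons 0 r - smult lam r" by simp
  then have "(\<Sum>i\<le>Suc n. coeff ([:-lam, 1:] * r) i * s i)
      = (\<Sum>i\<le>Suc n. coeff (pCons 0 r) i * s i) - lam * (\<Sum>i\<le>Suc n. coeff r i * s i)"
    by (simp add: algebra_simps sum_subtractf sum_distrib_left)
  also have "(\<Sum>i\<le>Suc n. coeff (pCons 0 r) i * s i) = (\<Sum>i\<le>n. coeff r i * s (Suc i))"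
    unfolding sum.atMost_Suc_shift by simp
  also have "(\<Sum>i\<le>Suc n. coeff r i * s i) = (\<Sum>i\<le>n. coeff r i * s i)"
    using assms by (simp add: coeff_eq_0)
  finally show ?thesis .
qed

lemma closure_geometric_sequence_omits_line:
  fixes lam c z :: complex
  assumes "z \<noteq> 0"
  shows "\<exists>t::real. complex_of_real t * z \<notin> closure {lam ^ n * c | n. True}"
proof (cases "norm lam \<le> 1")
  case True
  have "{lam ^ n * c | n. True} \<subseteq> cball 0 (norm c)"
    using True by (auto simp: norm_mult norm_power intro!: mult_left_le_one_le power_le_one)
  then have "closure {lam ^ n * c | n. True} \<subseteq> cball 0 (norm c)" by (simp add: closure_minimal)
  moreover have "norm (complex_of_real ((norm c + 1) / norm z) * z) = norm c + 1"
  proof -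
    have "norm (complex_of_real ((norm c + 1) / norm z) * z) = \<bar>(norm c + 1) / norm z\<bar> * norm z"
      by (simp only: norm_mult norm_of_real)
    also have "\<dots> = norm c + 1" using assms by simp
    finally show ?thesis .
  qed
  then have "complex_of_real ((norm c + 1) / norm z) * z \<notin> cball 0 (norm c)" by simp
  ultimately show ?thesis by blast
next
  case False
  then have lam: "norm lam > 1" by simp
  show ?thesis
  proof (cases "c = 0")
    case True
    then have "{lam ^ n * c | n. True} = {0}" by auto
    then show ?thesis using assms by (intro exI[of _ 1]) simp
  next
    case False
    obtain K where K: "norm z / norm c < norm lam ^ K" using real_arch_pow[OF lam] by blast
    have big: "norm (lam ^ n * c) \<ge> norm z" if "n \<ge> K" for n
    proof -
      have "norm lam ^ K \<le> norm lam ^ n" using that lam by (simp add: power_increasing)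
      then have "norm z / norm c < norm lam ^ n" using K by linarith
      then show ?thesis using False by (simp add: norm_mult norm_power field_simps)
    qed
    define F where "F = (\<lambda>n. lam ^ n * c) ` {..<K}"
    have "{lam ^ n * c | n. True} \<subseteq> F \<union> {w. norm w \<ge> norm z}"
    proof
      fix w assume "w \<in> {lam ^ n * c | n. True}"
      then obtain n where n: "w = lam ^ n * c" by blast
      show "w \<in> F \<union> {w. norm w \<ge> norm z}"
      proof (cases "n < K")
        case True
        then show ?thesis unfolding F_def n by blast
      next
        case False
        then show ?thesis using big[of n] n by simp
      qed
    qed
    moreover have "closed (F \<union> {w. norm w \<ge> norm z})"
      unfolding F_def by (intro closed_Un finite_imp_closed closed_Collect_le continuous_intros) auto
    ultimately have cl: "closure {lam ^ n * c | n. True} \<subseteq> F \<union> {w. norm w \<ge> norm z}"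
      by (simp add: closure_minimal)
    have "inj_on (\<lambda>t. complex_of_real t * z) {0<..<1}"
      using assms by (auto simp: inj_on_def)
    moreover have "infinite {0<..<1::real}" by simp
    ultimately have "infinite ((\<lambda>t. complex_of_real t * z) ` {0<..<1::real})"
      using finite_imageD by blast
    moreover have "finite F" unfolding F_def by simp
    ultimately obtain t :: real where t: "t \<in> {0<..<1}" "complex_of_real t * z \<notin> F"
      using finite_subset by (metis image_subsetI)
    then have "norm (complex_of_real t * z) < norm z" using assms by (simp add: norm_mult)
    then have "complex_of_real t * z \<notin> closure {lam ^ n * c | n. True}" using cl t(2) by auto
    then show ?thesis by blast
  qed
qed

text \<open>By continuity g maps the dense orbit into the closure of the geometric sequence
  \<lambda>^n g x0.\<close>

lemma no_eigenfunctional_if_dense_orbit: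
  fixes S :: "'x::topological_space \<Rightarrow> 'x" and g :: "'x \<Rightarrow> complex"
  assumes dense: "closure {(S ^^ n) x0 | n. True} = UNIV"
    and cont: "continuous_on UNIV g"
    and eigen: "\<And>y. g (S y) = lam * g y"
    and line: "\<And>t::real. \<exists>y. g y = complex_of_real t * z"
    and "z \<noteq> 0"
  shows False
proof -
  let ?orbit = "{lam ^ n * g x0 | n. True}"
  have "g ((S ^^ n) x0) = lam ^ n * g x0" for n
    by (induction n) (simp_all add: eigen)
  then have "g ` {(S ^^ n) x0 | n. True} \<subseteq> ?orbit" by blast
  then have "g ` {(S ^^ n) x0 | n. True} \<subseteq> closure ?orbit"
    using closure_subset by (rule subset_trans)
  then have "g ` closure {(S ^^ n) x0 | n. True} \<subseteq> closure ?orbit"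
    by (intro image_closure_subset continuous_on_subset[OF cont subset_UNIV] closed_closure)
  then have orbit: "range g \<subseteq> closure ?orbit" by (simp only: dense)
  have "complex_of_real t * z \<in> closure ?orbit" for t
  proof -
    obtain y where "g y = complex_of_real t * z" using line by blast
    then show ?thesis using orbit by (metis rangeI subsetD)
  qed
  then show False using closure_geometric_sequence_omits_line[OF \<open>z \<noteq> 0\<close>] by blast
qed

text \<open>The scalar field embedded into \<complex>, with a left inverse pr that is linear over the
  scalars; it is needed to find an eigenvalue of T' when the scalars are real.\<close>

locale complexification =
  fixes emb :: "'a::{real_normed_field, polish_space} \<Rightarrow> complex" and pr :: "complex \<Rightarrow> 'a"
  assumes emb_add: "\<And>a b. emb (a + b) = emb a + emb b"
    and emb_mult: "\<And>a b. emb (a * b) = emb a * emb b"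
    and emb_of_real: "\<And>t. emb (of_real t) = complex_of_real t"
    and continuous_emb: "continuous_on UNIV emb"
    and pr_add: "\<And>z w. pr (z + w) = pr z + pr w"
    and pr_emb_mult: "\<And>a z. pr (emb a * z) = a * pr z"
    and pr_emb: "\<And>a. pr (emb a) = a"
begin

lemma emb_0: "emb 0 = 0"
  using emb_add[of 0 0] by simp

lemma pr_0: "pr 0 = 0"
  using pr_add[of 0 0] by simp

lemma emb_eq_0_iff: "emb a = 0 \<longleftrightarrow> a = 0"
  by (metis pr_emb pr_0 emb_0)

lemma emb_sum: "emb (\<Sum>i\<in>S. h i) = (\<Sum>i\<in>S. emb (h i))"
  by (induction S rule: infinite_finite_induct) (simp_all add: emb_add emb_0)

lemma pr_sum: "pr (\<Sum>i\<in>S. h i) = (\<Sum>i\<in>S. pr (h i))"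
  by (induction S rule: infinite_finite_induct) (simp_all add: pr_add pr_0)

lemma coeff_map_poly_emb: "coeff (map_poly emb q) i = emb (coeff q i)"
  by (simp add: coeff_map_poly emb_0)

lemma degree_map_poly_emb: "degree (map_poly emb q) = degree q"
  using emb_eq_0_iff by (intro degree_map_poly) simp

lemma linear_factor_exists:
  assumes "degree q \<ge> 1"
  obtains lam r where "map_poly emb q = [:-lam, 1:] * r" "degree r = degree q - 1"
proof -
  let ?cq = "map_poly emb q"
  have deg: "degree ?cq = degree q" by (rule degree_map_poly_emb)
  then have "\<not> constant (poly ?cq)" using assms constant_degree[of ?cq] by simp
  then obtain lam where "poly ?cq lam = 0" using fundamental_theorem_of_algebra by blast
  then obtain r where r: "?cq = [:-lam, 1:] * r" using poly_eq_0_iff_dvd by (metis dvdE)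
  have "?cq \<noteq> 0" using deg assms by (metis degree_0 not_one_le_zero)
  then have "r \<noteq> 0" using r by auto
  have "degree ([:-lam, 1:] * r) = degree [:-lam, 1:] + degree r"
    by (rule degree_mult_eq) (simp_all add: \<open>r \<noteq> 0\<close>)
  then have "degree r = degree q - 1" using r deg by simp
  then show ?thesis using that r by blast
qed

lemma annihilates_map_poly_pr:
  assumes "degree r \<le> n" and rel: "\<And>y. (\<Sum>i\<le>n. coeff r i * emb (f ((T ^^ i) y))) = 0"
  shows "annihilates T f (map_poly pr r)"
  unfolding annihilates_def
proof
  fix y
  have "degree (map_poly pr r) \<le> n"
    by (rule degree_le) (use assms(1) in \<open>simp add: coeff_map_poly pr_0 coeff_eq_0\<close>)
  then have "(\<Sum>i\<le>degree (map_poly pr r). coeff (map_poly pr r) i * f ((T ^^ i) y))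
      = (\<Sum>i\<le>n. coeff (map_poly pr r) i * f ((T ^^ i) y))"
    by (rule sum_atMost_coeff_degree[symmetric])
  also have "\<dots> = (\<Sum>i\<le>n. pr (coeff r i * emb (f ((T ^^ i) y))))"
  proof (intro sum.cong refl)
    fix i
    have "pr (coeff r i * emb (f ((T ^^ i) y))) = f ((T ^^ i) y) * pr (coeff r i)"
      by (subst mult.commute) (rule pr_emb_mult)
    then show "coeff (map_poly pr r) i * f ((T ^^ i) y) = pr (coeff r i * emb (f ((T ^^ i) y)))"
      by (simp add: coeff_map_poly pr_0 mult.commute)
  qed
  also have "\<dots> = 0" by (simp only: pr_sum[symmetric] rel pr_0)
  finally show "(\<Sum>i\<le>degree (map_poly pr r). coeff (map_poly pr r) i * f ((T ^^ i) y)) = 0" .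
qed

text \<open>With q = (X - \<lambda>) r over \<complex>, the eigenfunctional is g = r(T') f; it is non-zero
  because q has minimal degree.\<close>

lemma eigenfunctional_exists:
  fixes T :: "(nat \<Rightarrow> 'a) \<Rightarrow> (nat \<Rightarrow> 'a)"
  assumes lin: "klinear_op T" and cont: "continuous_on UNIV T"
    and f: "f \<in> dual_space" "f \<noteq> (\<lambda>x. 0)"
    and q: "q \<noteq> 0" "annihilates T f q"
    and minimal: "\<And>r. r \<noteq> 0 \<Longrightarrow> annihilates T f r \<Longrightarrow> degree q \<le> degree r"
  obtains g lam y1 where "continuous_on UNIV g" "\<And>y. g (T y) = lam * g y" "g y1 \<noteq> 0"
    "\<And>t. g (\<lambda>n. of_real t * y1 n) = complex_of_real t * g y1"
proof -
  have "degree q \<ge> 1" using degree_annihilator_pos q f(2) by blast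
  then obtain lam r where r: "map_poly emb q = [:-lam, 1:] * r" "degree r = degree q - 1"
    using linear_factor_exists by blast
  define n where "n = degree q - 1"
  have Suc_n: "Suc n = degree q" unfolding n_def using \<open>degree q \<ge> 1\<close> by simp
  define s where "s y i = emb (f ((T ^^ i) y))" for y i
  define g where "g y = (\<Sum>i\<le>n. coeff r i * s y i)" for y
  have "g (T y) - lam * g y = (\<Sum>i\<le>Suc n. coeff (map_poly emb q) i * s y i)" for y
    unfolding g_def r(1)
    by (subst sum_coeff_linear_factor) (simp_all add: r(2) n_def s_def funpow_swap1)
  also have "\<dots> y = emb (\<Sum>i\<le>degree q. coeff q i * f ((T ^^ i) y))" for y
    unfolding Suc_n s_def by (simp add: coeff_map_poly_emb emb_sum emb_mult)
  also have "\<dots> y = 0" for y using q(2) emb_0 unfolding annihilates_def by simp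
  finally have eigen: "g (T y) = lam * g y" for y by simp
  have "\<exists>y1. g y1 \<noteq> 0"
  proof (rule ccontr)
    assume "\<nexists>y1. g y1 \<noteq> 0"
    then have "annihilates T f (map_poly pr r)"
      using annihilates_map_poly_pr[of r n] r(2) unfolding g_def s_def n_def by simp
    moreover have "lead_coeff (map_poly emb q) = lead_coeff r"
      unfolding r(1) by (simp only: lead_coeff_mult) simp
    then have "coeff (map_poly pr r) (degree r) = lead_coeff q"
      by (simp add: coeff_map_poly pr_0 coeff_map_poly_emb degree_map_poly_emb) (metis pr_emb)
    then have "map_poly pr r \<noteq> 0" using q(1) by (metis coeff_0 leading_coeff_0_iff)
    moreover have "degree (map_poly pr r) \<le> degree r"
      by (rule degree_le) (simp add: coeff_map_poly pr_0 coeff_eq_0)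
    ultimately show False using minimal r(2) \<open>degree q \<ge> 1\<close> by fastforce
  qed
  then obtain y1 where "g y1 \<noteq> 0" by blast
  moreover have "g (\<lambda>n. of_real t * y1 n) = complex_of_real t * g y1" for t
  proof -
    have "klinear f" using f(1) unfolding dual_space_def by simp
    then have "s (\<lambda>n. of_real t * y1 n) i = complex_of_real t * s y1 i" for i
      unfolding s_def klinear_op_scale[OF klinear_op_funpow[OF lin]] klinear_def
      by (simp add: emb_mult emb_of_real)
    then show ?thesis unfolding g_def by (simp add: sum_distrib_left mult_ac)
  qed
  moreover have "continuous_on UNIV g"
  proof -
    have "continuous_on UNIV (\<lambda>y. f ((T ^^ i) y))" for i
      using f(1) continuous_on_compose2[OF _ continuous_on_funpow[OF cont]]
      unfolding dual_space_def by blast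
    then have "continuous_on UNIV (\<lambda>y. s y i)" for i
      unfolding s_def using continuous_on_compose2[OF continuous_emb] by blast
    then show ?thesis unfolding g_def by (intro continuous_intros)
  qed
  ultimately show ?thesis using that eigen by blast
qed

lemma hypercyclic_imp_no_fin_dim_dual_invariant:
  fixes T :: "(nat \<Rightarrow> 'a) \<Rightarrow> (nat \<Rightarrow> 'a)"
  assumes lin: "klinear_op T" and cont: "continuous_on UNIV T" and "hypercyclic T"
  shows "no_fin_dim_dual_invariant T"
  unfolding no_fin_dim_dual_invariant_def
proof
  assume "\<exists>L. dual_subspace L \<and> finite_dim L \<and> L \<noteq> {\<lambda>x. 0} \<and> dual_op T ` L \<subseteq> L"
  then obtain L where L: "dual_subspace L" "finite_dim L" "L \<noteq> {\<lambda>x. 0}" "dual_op T ` L \<subseteq> L"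
    by blast
  then obtain f where f: "f \<in> L" "f \<noteq> (\<lambda>x. 0)" unfolding dual_subspace_def by blast
  then have "f \<in> dual_space" using L(1) unfolding dual_subspace_def by blast
  obtain q where "q \<noteq> 0" "annihilates T f q"
    "\<And>r. r \<noteq> 0 \<Longrightarrow> annihilates T f r \<Longrightarrow> degree q \<le> degree r"
    using annihilating_poly_minimal_exists[OF annihilating_poly_exists[OF L(2,4) f(1)]] by blast
  then obtain g lam y1 where "continuous_on UNIV g" "\<And>y. g (T y) = lam * g y" "g y1 \<noteq> 0"
    "\<And>t. g (\<lambda>n. of_real t * y1 n) = complex_of_real t * g y1"
    using eigenfunctional_exists[OF lin cont \<open>f \<in> dual_space\<close> f(2)] by blast
  moreover obtain x0 where "closure {(T ^^ n) x0 | n. True} = UNIV"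
    using \<open>hypercyclic T\<close> unfolding hypercyclic_def by blast
  ultimately show False using no_eigenfunctional_if_dense_orbit by metis
qed

lemma hypercyclicity_equivalences:
  fixes T :: "(nat \<Rightarrow> 'a) \<Rightarrow> (nat \<Rightarrow> 'a)"
  assumes "klinear_op T" "continuous_on UNIV T"
  shows "(no_fin_dim_dual_invariant T \<longleftrightarrow> hypercyclic T) \<and>
         (hypercyclic T \<longleftrightarrow> hereditarily_hypercyclic T) \<and>
         (hereditarily_hypercyclic T \<longleftrightarrow> poly_seq_dense T)"
  using no_fin_dim_dual_invariant_imp_poly_seq_dense[OF assms]
    poly_seq_dense_imp_hereditarily_hypercyclic[of T]
    hereditarily_hypercyclic_imp_hypercyclic[of T]
    hypercyclic_imp_no_fin_dim_dual_invariant[OF assms]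
  by blast

end

interpretation real_complexification: complexification complex_of_real Re
  by unfold_locales (auto intro: continuous_intros)

interpretation complex_complexification: complexification "\<lambda>z. z" "\<lambda>z. z"
  by unfold_locales (auto intro: continuous_intros)

theorem corollary1p2:
  shows "(\<forall>T :: (nat \<Rightarrow> real) \<Rightarrow> (nat \<Rightarrow> real).
            klinear_op T \<and> continuous_on UNIV T \<longrightarrow>
            (no_fin_dim_dual_invariant T \<longleftrightarrow> hypercyclic T) \<and>
            (hypercyclic T \<longleftrightarrow> hereditarily_hypercyclic T) \<and>
            (hereditarily_hypercyclic T \<longleftrightarrow> poly_seq_dense T))
       \<and> (\<forall>T :: (nat \<Rightarrow> complex) \<Rightarrow> (nat \<Rightarrow> complex).
            klinear_op T \<and> continuous_on UNIV T \<longrightarrow>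
            (no_fin_dim_dual_invariant T \<longleftrightarrow> hypercyclic T) \<and>
            (hypercyclic T \<longleftrightarrow> hereditarily_hypercyclic T) \<and>
            (hereditarily_hypercyclic T \<longleftrightarrow> poly_seq_dense T))"
  using real_complexification.hypercyclicity_equivalences
    complex_complexification.hypercyclicity_equivalences
  by blast

end
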